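(* Let $Q=\{[\bar x]\in\mathbb P^3(\mathbb K):\bar x\cdot\bar x=0\}$. Let $a,b,c\in\mathbb P^3(\mathbb K)\setminus Q$, suppose $a\notin\{b\}\cup b^\perp$, and suppose $\gamma_c\gamma_a$ commutes with $\gamma_b\gamma_c$. Then $c\in\ell\cup\ell^\perp$, where $\ell$ is the line spanned by $a$ and $b$.
   Context: $\mathbb K$ is an algebraically closed field of characteristic 0 (an ultrapower of $\mathbb C$), and $\cdot$ is the standard bilinear form $\bar x\cdot\bar y=\sum_{i<4}x_iy_i$ on $\mathbb K^4$. For a projective subspace $P\subseteq\mathbb P^3$ with lift $\tilde P\le\mathbb K^4$, $P^\perp$ is the projective subspace whose lift is $\tilde P^\perp=\{w:w\cdot v=0\ \forall v\in\tilde P\}$. For $x\in\mathbb P^3\setminus Q$, $\gamma_x:Q\to Q$ is the involution defined by collinearity with $x$: for $y\in Q$ the line through $x,y$ meets $Q$ in the divisor $y+\gamma_x(y)$; equivalently $\gamma_x$ is the restriction to $Q$ of the projectivisation of the linear map which is $-1$ on $\tilde x$ and the identity on $\tilde x^\perp$. Composition is written by juxtaposition. *)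

theory Defs
  imports "HOL-Analysis.Finite_Cartesian_Product" "HOL-Computational_Algebra.Polynomial"
begin

text \<open>Points of P^3(K) are represented by nonzero vectors in K^4 (homogeneous coordinates);
  all notions below are invariant under nonzero rescaling.\<close>

definition bdot :: "'k::comm_ring_1 ^ 4 \<Rightarrow> 'k ^ 4 \<Rightarrow> 'k" where
  "bdot x y = (\<Sum>i\<in>UNIV. x $ i * y $ i)"

definition proj_eq :: "'k::field ^ 4 \<Rightarrow> 'k ^ 4 \<Rightarrow> bool" where
  "proj_eq x y \<longleftrightarrow> (\<exists>t. t \<noteq> 0 \<and> y = (\<chi> i. t * x $ i))"

definition quadric :: "('k::field ^ 4) set" where
  "quadric = {q. q \<noteq> 0 \<and> bdot q q = 0}"

text \<open>Linear map which is -1 on the line of x and the identity on its orthogonal complement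
  (for bdot x x nonzero); gamma_x is its projectivisation restricted to Q.\<close>
definition gamma :: "'k::field ^ 4 \<Rightarrow> 'k ^ 4 \<Rightarrow> 'k ^ 4" where
  "gamma x y = (\<chi> i. y $ i - 2 * bdot x y / bdot x x * x $ i)"

definition on_line :: "'k::field ^ 4 \<Rightarrow> 'k ^ 4 \<Rightarrow> 'k ^ 4 \<Rightarrow> bool" where
  "on_line a b c \<longleftrightarrow> (\<exists>s t. c = (\<chi> i. s * a $ i + t * b $ i))"

definition on_perp_line :: "'k::field ^ 4 \<Rightarrow> 'k ^ 4 \<Rightarrow> 'k ^ 4 \<Rightarrow> bool" where
  "on_perp_line a b c \<longleftrightarrow> bdot a c = 0 \<and> bdot b c = 0"

end

theory Submission
  imports Defs "HOL-Analysis.Cartesian_Space"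
begin

text \<open>
  Since \<open>\<gamma>\<^sub>c\<gamma>\<^sub>c = 1\<close>, the hypothesis says that \<open>A = \<gamma>\<^sub>c\<gamma>\<^sub>a\<gamma>\<^sub>b\<gamma>\<^sub>c\<close> and
  \<open>B = \<gamma>\<^sub>b\<gamma>\<^sub>a\<close>, both induced by linear maps of \<open>K\<^sup>4\<close>, agree projectively on \<open>Q\<close>.
  A linear map having every isotropic vector as an eigenvector is a scalar (test it on the
  isotropic vectors \<open>e\<^sub>j \<plusminus> i e\<^sub>k\<close>), so \<open>A = \<mu> B\<close>, and \<open>\<mu> = \<plusminus>1\<close> because both are
  isometries. The sign \<open>-1\<close> is impossible: \<open>A\<close> fixes \<open>\<gamma>\<^sub>c v\<close> for every \<open>v\<close> orthogonal to
  \<open>a\<close> and \<open>b\<close>, whereas \<open>B\<close> has no eigenvalue \<open>-1\<close> as \<open>a \<cdot> b \<noteq> 0\<close>. Hence \<open>\<gamma>\<^sub>c\<close>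
  conjugates \<open>\<gamma>\<^sub>a\<gamma>\<^sub>b\<close> to its inverse and so maps the image of \<open>B - 1\<close>, which is the
  plane spanned by \<open>a\<close> and \<open>b\<close>, into itself. Finally \<open>c\<close> is proportional to
  \<open>x - \<gamma>\<^sub>c x\<close> whenever \<open>c \<cdot> x \<noteq> 0\<close>, so a reflection preserving a plane has its centre
  in the plane or orthogonal to it.
\<close>

lemma bdot_commute: "bdot x y = bdot y x"
  unfolding bdot_def by (simp add: mult.commute)

lemma bdot_add_left: "bdot (x + y) z = bdot x z + bdot y z"
  unfolding bdot_def by (simp add: distrib_right sum.distrib)

lemma bdot_add_right: "bdot x (y + z) = bdot x y + bdot x z"
  unfolding bdot_def by (simp add: distrib_left sum.distrib)

lemma bdot_diff_left: "bdot (x - y) z = bdot x z - bdot y z"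
  unfolding bdot_def by (simp add: left_diff_distrib sum_subtractf)

lemma bdot_diff_right: "bdot x (y - z) = bdot x y - bdot x z"
  unfolding bdot_def by (simp add: right_diff_distrib sum_subtractf)

lemma bdot_scale_left: "bdot (s *s x) y = s * bdot x y"
  unfolding bdot_def by (simp add: sum_distrib_left mult.assoc)

lemma bdot_scale_right: "bdot x (s *s y) = s * bdot x y"
  unfolding bdot_def by (simp add: sum_distrib_left mult.left_commute)

lemma bdot_axis_right [simp]: "bdot x (axis j 1) = x $ j"
  unfolding bdot_def axis_def by (simp add: if_distrib cong: if_cong)

lemmas bdot_simps =
  bdot_add_left bdot_add_right bdot_diff_left bdot_diff_right bdot_scale_left bdot_scale_right

lemma proj_eq_iff: "proj_eq x y \<longleftrightarrow> (\<exists>t. t \<noteq> 0 \<and> y = t *s x)"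
  unfolding proj_eq_def vector_scalar_mult_def ..

lemma on_line_iff_in_span: "on_line a b c \<longleftrightarrow> c \<in> vec.span {a, b}"
proof -
  have "on_line a b c \<longleftrightarrow> (\<exists>s t. c - s *s a = t *s b)"
    unfolding on_line_def by (simp add: vec_eq_iff algebra_simps)
  then show ?thesis
    by (auto simp: vec.span_breakdown_eq vec.span_singleton image_iff)
qed

lemma gamma_eq: "gamma x y = y - (2 * bdot x y / bdot x x) *s x"
  unfolding gamma_def by (simp add: vec_eq_iff)

lemma linear_gamma: "Vector_Spaces.linear (*s) (*s) (gamma x)"
  unfolding Vector_Spaces.linear_iff
  by (simp add: vec.vector_space_axioms gamma_eq bdot_simps vec_eq_iff add_divide_distrib algebra_simps)

interpretation gamma: Vector_Spaces.linear "(*s)" "(*s)" "gamma x" for x :: "'k::field ^ 4"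
  by (fact linear_gamma)

lemma gamma_orthogonal: "bdot x y = 0 \<Longrightarrow> gamma x y = y"
  unfolding gamma_eq by simp

lemma gamma_gamma: "bdot x x \<noteq> 0 \<Longrightarrow> gamma x (gamma x y) = y"
  unfolding gamma_eq by (simp add: vec_eq_iff bdot_simps field_simps)

lemma bdot_gamma_gamma: "bdot x x \<noteq> 0 \<Longrightarrow> bdot (gamma x y) (gamma x z) = bdot y z"
  unfolding gamma_eq by (simp add: bdot_simps field_simps bdot_commute[of y x])

lemma exists_third_index: "\<exists>k::4. k \<noteq> i \<and> k \<noteq> j"
proof -
  have "card {i, j} < CARD(4)" by (simp add: card_insert_if)
  then have "{i, j} \<noteq> UNIV" by auto
  then show ?thesis by auto
qed

lemma axis_plus_isotropic_in_quadric:
  fixes i :: "'k::field"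
  assumes "j \<noteq> k" "i\<^sup>2 = -1"
  shows "axis j 1 + i *s axis k 1 \<in> quadric"
proof -
  have "(axis j 1 + i *s axis k 1) $ j \<noteq> 0"
    using assms(1) by (simp add: axis_def)
  then have "axis j 1 + i *s axis k 1 \<noteq> 0"
    by (metis zero_index)
  moreover have "bdot (axis j 1 + i *s axis k 1) (axis j 1 + i *s axis k 1) = 1 + i\<^sup>2"
    using assms(1) by (simp add: bdot_simps, simp add: axis_def power2_eq_square)
  ultimately show ?thesis
    using assms(2) unfolding quadric_def by simp
qed

lemma axis_eigenvector_if_isotropic_eigenvectors:
  fixes h :: "'k::field_char_0 ^ 4 \<Rightarrow> 'k ^ 4" and i :: 'k
  assumes lin: "Vector_Spaces.linear (*s) (*s) h" and i: "i\<^sup>2 = -1"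
    and eigen: "\<And>q. q \<in> quadric \<Longrightarrow> \<exists>t. h q = t *s q"
  shows "h (axis j 1) = h (axis j 1) $ j *s axis j 1"
proof -
  interpret h: Vector_Spaces.linear "(*s)" "(*s)" h by (fact lin)
  have "h (axis j 1) $ l = 0" if "l \<noteq> j" for l
  proof -
    obtain k where k: "k \<noteq> j" "k \<noteq> l"
      using exists_third_index by blast
    have "(-i)\<^sup>2 = -1"
      using i by simp
    then obtain s t where "h (axis j 1 + i *s axis k 1) = s *s (axis j 1 + i *s axis k 1)"
      and "h (axis j 1 + (-i) *s axis k 1) = t *s (axis j 1 + (-i) *s axis k 1)"
      using eigen axis_plus_isotropic_in_quadric k(1) i by metis
    \<comment> \<open>the two isotropic vectors add up to \<open>2 e\<^sub>j\<close>,
      so \<open>h e\<^sub>j\<close> lies in the span of \<open>e\<^sub>j\<close> and \<open>e\<^sub>k\<close>\<close>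
    moreover have "(axis j 1 + i *s axis k 1) + (axis j 1 + (-i) *s axis k 1) = 2 *s axis j 1"
      by (simp add: vec_eq_iff)
    ultimately have
      "2 *s h (axis j 1) = s *s (axis j 1 + i *s axis k 1) + t *s (axis j 1 + (-i) *s axis k 1)"
      by (metis h.add h.scale)
    then have "2 * h (axis j 1) $ l = 0"
      using k that by (simp add: vec_eq_iff axis_def)
    then show ?thesis by simp
  qed
  then show ?thesis
    by (auto simp: vec_eq_iff axis_def)
qed

lemma linear_scalar_if_isotropic_eigenvectors:
  fixes h :: "'k::field_char_0 ^ 4 \<Rightarrow> 'k ^ 4" and i :: 'k
  assumes lin: "Vector_Spaces.linear (*s) (*s) h" and i: "i\<^sup>2 = -1"
    and eigen: "\<And>q. q \<in> quadric \<Longrightarrow> \<exists>t. h q = t *s q"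
  shows "\<exists>\<mu>. \<forall>v. h v = \<mu> *s v"
proof -
  interpret h: Vector_Spaces.linear "(*s)" "(*s)" h by (fact lin)
  define \<kappa> where "\<kappa> j = h (axis j 1) $ j" for j
  have diagonal: "h (axis j 1) = \<kappa> j *s axis j 1" for j
    unfolding \<kappa>_def by (rule axis_eigenvector_if_isotropic_eigenvectors[OF lin i eigen])
  have \<kappa>_eq: "\<kappa> j = \<kappa> k" for j k
  proof (cases "j = k")
    case False
    obtain s where "h (axis j 1 + i *s axis k 1) = s *s (axis j 1 + i *s axis k 1)"
      using eigen axis_plus_isotropic_in_quadric False i by metis
    then have "\<kappa> j *s axis j 1 + (i * \<kappa> k) *s axis k 1 = s *s (axis j 1 + i *s axis k 1)"
      by (simp add: h.add h.scale diagonal vector_smult_assoc mult.commute)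
    then have "(\<kappa> j *s axis j 1 + (i * \<kappa> k) *s axis k 1) $ l
        = (s *s (axis j 1 + i *s axis k 1)) $ l" for l
      by simp
    from this[of j] this[of k] have "\<kappa> j = s" "i * \<kappa> k = s * i"
      using False by (simp_all add: axis_def)
    moreover have "i \<noteq> 0"
      using i by auto
    ultimately show ?thesis by simp
  qed simp
  have "h v = \<kappa> 1 *s v" for v
  proof -
    have "h v = (\<Sum>j\<in>UNIV. (v $ j) *s h (axis j 1))"
      by (subst basis_expansion[of v, symmetric]) (simp add: h.sum h.scale)
    also have "\<dots> = (\<Sum>j\<in>UNIV. \<kappa> 1 *s ((v $ j) *s axis j 1))"
      by (intro sum.cong refl) (metis diagonal \<kappa>_eq vector_smult_assoc mult.commute)
    also have "\<dots> = \<kappa> 1 *s (\<Sum>j\<in>UNIV. (v $ j) *s axis j 1)"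
      by (simp only: vec.scale_sum_right)
    also have "\<dots> = \<kappa> 1 *s v"
      by (simp only: basis_expansion)
    finally show ?thesis .
  qed
  then show ?thesis by blast
qed

lemma proportional_if_proj_eq_on_quadric:
  fixes f g g' :: "'k::{alg_closed_field, field_char_0} ^ 4 \<Rightarrow> 'k ^ 4"
  assumes lin: "Vector_Spaces.linear (*s) (*s) f" "Vector_Spaces.linear (*s) (*s) g"
      "Vector_Spaces.linear (*s) (*s) g'"
    and inverse: "\<And>v. g (g' v) = v" "\<And>v. g' (g v) = v"
    and proj: "\<And>q. q \<in> quadric \<Longrightarrow> proj_eq (f q) (g q)"
  shows "\<exists>\<mu>. \<forall>v. f v = \<mu> *s g v"
proof -
  interpret g: Vector_Spaces.linear "(*s)" "(*s)" g by (fact lin(2))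
  interpret g': Vector_Spaces.linear "(*s)" "(*s)" g' by (fact lin(3))
  have lin_h: "Vector_Spaces.linear (*s) (*s) (g' \<circ> f)"
    using lin(1,3) by (rule Vector_Spaces.linear_compose)
  obtain i :: 'k where i: "i\<^sup>2 = -1"
    using nth_root_exists[of 2 "-1 :: 'k"] by auto
  have eigen: "\<exists>t. (g' \<circ> f) q = t *s q" if q: "q \<in> quadric" for q
  proof -
    obtain t where "t \<noteq> 0" "g q = t *s f q"
      using proj[OF q] by (auto simp: proj_eq_iff)
    then have "f q = (1 / t) *s g q"
      by (simp add: vector_smult_assoc)
    then show ?thesis
      by (auto simp: g'.scale inverse(2))
  qed
  obtain \<mu> where \<mu>: "\<And>v. (g' \<circ> f) v = \<mu> *s v"
    using linear_scalar_if_isotropic_eigenvectors[OF lin_h i eigen] by blast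
  have "f v = \<mu> *s g v" for v
    using arg_cong[OF \<mu>[of v], of g] by (simp add: inverse(1) g.scale)
  then show ?thesis by blast
qed

lemma nonzero_minor_if_not_proj_eq:
  fixes a b :: "'k::field ^ 4"
  assumes "a \<noteq> 0" "b \<noteq> 0" "\<not> proj_eq b a"
  obtains j k where "a $ j * b $ k - a $ k * b $ j \<noteq> 0"
proof (rule ccontr)
  assume "\<not> thesis"
  with that have minors: "a $ j * b $ k = a $ k * b $ j" for j k
    by fastforce
  obtain j where j: "a $ j \<noteq> 0"
    using assms(1) by (metis vec_eq_iff zero_index)
  define t where "t = b $ j / a $ j"
  have "b = t *s a"
    using minors[of j] j by (simp add: vec_eq_iff t_def field_simps)
  then have "t \<noteq> 0" "a = (1 / t) *s b"
    using assms(2) by (auto simp: vector_smult_assoc)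
  then show False
    using assms(3) by (metis proj_eq_iff divide_eq_0_iff one_neq_zero)
qed

lemma bdot_pair_solvable_on_minor:
  fixes a b :: "'k::field ^ 4"
  assumes "a $ j * b $ k - a $ k * b $ j \<noteq> 0"
  obtains w where "bdot a w = \<alpha>" "bdot b w = \<beta>" "\<And>l. l \<noteq> j \<Longrightarrow> l \<noteq> k \<Longrightarrow> w $ l = 0"
proof
  define D where "D = a $ j * b $ k - a $ k * b $ j"
  define w where "w = ((\<alpha> * b $ k - \<beta> * a $ k) / D) *s axis j 1
    + ((\<beta> * a $ j - \<alpha> * b $ j) / D) *s axis k 1"
  have "D \<noteq> 0" using assms by (simp add: D_def)
  then show "bdot a w = \<alpha>" "bdot b w = \<beta>"
    unfolding w_def by (simp_all add: bdot_simps field_simps, simp_all add: D_def algebra_simps)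
  show "w $ l = 0" if "l \<noteq> j" "l \<noteq> k" for l
    using that by (simp add: w_def axis_def)
qed

lemma bdot_pair_solvable:
  fixes a b :: "'k::field ^ 4"
  assumes "a \<noteq> 0" "b \<noteq> 0" "\<not> proj_eq b a"
  obtains w where "bdot a w = \<alpha>" "bdot b w = \<beta>"
  by (metis assms nonzero_minor_if_not_proj_eq bdot_pair_solvable_on_minor)

lemma exists_orthogonal_to_pair:
  fixes a b :: "'k::field ^ 4"
  assumes "a \<noteq> 0" "b \<noteq> 0" "\<not> proj_eq b a"
  obtains v where "v \<noteq> 0" "bdot a v = 0" "bdot b v = 0"
proof -
  obtain j k where minor: "a $ j * b $ k - a $ k * b $ j \<noteq> 0"
    using nonzero_minor_if_not_proj_eq[OF assms] .
  obtain l where l: "l \<noteq> j" "l \<noteq> k"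
    using exists_third_index by blast
  obtain w where w: "bdot a w = a $ l" "bdot b w = b $ l" "w $ l = 0"
    using bdot_pair_solvable_on_minor[OF minor, of "a $ l" "b $ l"] l by blast
  have "(axis l 1 - w) $ l \<noteq> 0"
    using w(3) by simp
  then have "axis l 1 - w \<noteq> 0"
    by (metis zero_index)
  moreover have "bdot a (axis l 1 - w) = 0" "bdot b (axis l 1 - w) = 0"
    using w(1,2) by (simp_all add: bdot_simps)
  ultimately show ?thesis
    by (rule that)
qed

lemma gamma_gamma_eq_neg_imp_zero:
  fixes a b u :: "'k::field_char_0 ^ 4"
  assumes aa: "bdot a a \<noteq> 0" and bb: "bdot b b \<noteq> 0" and ab: "bdot a b \<noteq> 0"
    and neg: "gamma b (gamma a u) = - u"
  shows "u = 0"
proof -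
  define \<alpha> where "\<alpha> = 2 * bdot a u / bdot a a"
  define \<beta> where "\<beta> = 2 * bdot b u / bdot b b"
  have "gamma a u = - gamma b u"
    using arg_cong[OF neg, of "gamma b"] by (simp add: gamma_gamma[OF bb] gamma.neg)
  then have u: "2 *s u = \<alpha> *s a + \<beta> *s b"
    unfolding gamma_eq \<alpha>_def \<beta>_def by (simp add: vec_eq_iff algebra_simps)
  have "bdot a (2 *s u) = \<alpha> * bdot a a + \<beta> * bdot a b"
    "bdot b (2 *s u) = \<alpha> * bdot b a + \<beta> * bdot b b"
    unfolding u by (simp_all add: bdot_simps)
  then have "\<beta> * bdot a b = 0" "\<alpha> * bdot b a = 0"
    using aa bb by (simp_all add: bdot_scale_right \<alpha>_def \<beta>_def)
  then have "\<alpha> = 0" "\<beta> = 0"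
    using ab by (simp_all add: bdot_commute[of b a])
  then show "u = 0"
    using u by (simp add: vec_eq_iff)
qed

lemma scale_eq_one_if_gamma_conj_eq_scale:
  fixes a b c :: "'k::field_char_0 ^ 4"
  assumes "a \<noteq> 0" "b \<noteq> 0" "\<not> proj_eq b a"
    and aa: "bdot a a \<noteq> 0" and bb: "bdot b b \<noteq> 0" and cc: "bdot c c \<noteq> 0"
    and ab: "bdot a b \<noteq> 0"
    and \<mu>: "\<And>v. gamma c (gamma a (gamma b (gamma c v))) = \<mu> *s gamma b (gamma a v)"
  shows "\<mu> = 1"
proof -
  have "bdot a a = \<mu> * \<mu> * bdot a a"
    using arg_cong2[OF \<mu>[of a] \<mu>[of a], of bdot]
    by (simp add: bdot_simps bdot_gamma_gamma aa bb cc)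
  then have "\<mu> = 1 \<or> \<mu> = -1"
    using aa by (simp add: square_eq_1_iff)
  moreover have "\<mu> \<noteq> -1"
  proof
    assume "\<mu> = -1"
    obtain v where v: "v \<noteq> 0" "bdot a v = 0" "bdot b v = 0"
      using exists_orthogonal_to_pair[OF assms(1-3)] .
    have "gamma c (gamma a (gamma b (gamma c (gamma c v)))) = gamma c v"
      by (simp add: gamma_gamma[OF cc] gamma_orthogonal v)
    then have "gamma b (gamma a (gamma c v)) = - gamma c v"
      using \<mu>[of "gamma c v"] \<open>\<mu> = -1\<close>
      by (simp add: vector_smult_lneg minus_equation_iff[of _ "gamma c v"])
    then have "gamma c v = 0"
      by (rule gamma_gamma_eq_neg_imp_zero[OF aa bb ab])
    then have "v = 0"
      by (metis gamma_gamma[OF cc] gamma.zero)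
    with v(1) show False ..
  qed
  ultimately show ?thesis by simp
qed

lemma gamma_conj_eq_if_proj_eq_on_quadric:
  fixes a b c :: "'k::{alg_closed_field, field_char_0} ^ 4"
  assumes "a \<noteq> 0" "b \<noteq> 0" "\<not> proj_eq b a"
    and aa: "bdot a a \<noteq> 0" and bb: "bdot b b \<noteq> 0" and cc: "bdot c c \<noteq> 0"
    and ab: "bdot a b \<noteq> 0"
    and proj: "\<And>q. q \<in> quadric \<Longrightarrow>
      proj_eq (gamma c (gamma a (gamma b (gamma c q)))) (gamma b (gamma a q))"
  shows "gamma c (gamma a (gamma b (gamma c v))) = gamma b (gamma a v)"
proof -
  define f where "f = gamma c \<circ> gamma a \<circ> gamma b \<circ> gamma c"
  define g where "g = gamma b \<circ> gamma a"
  have lin: "Vector_Spaces.linear (*s) (*s) f" "Vector_Spaces.linear (*s) (*s) g"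
      "Vector_Spaces.linear (*s) (*s) (gamma a \<circ> gamma b)"
    unfolding f_def g_def Vector_Spaces.linear_iff
    by (simp_all add: vec.vector_space_axioms gamma.add gamma.scale)
  have inverse: "g ((gamma a \<circ> gamma b) v) = v" "(gamma a \<circ> gamma b) (g v) = v" for v
    unfolding g_def by (simp_all add: gamma_gamma aa bb)
  have "proj_eq (f q) (g q)" if "q \<in> quadric" for q
    using proj[OF that] unfolding f_def g_def by simp
  then obtain \<mu> where "\<And>v. f v = \<mu> *s g v"
    using proportional_if_proj_eq_on_quadric[OF lin inverse] by blast
  moreover from this have "\<mu> = 1"
    unfolding f_def g_def
    by (intro scale_eq_one_if_gamma_conj_eq_scale[OF assms(1-7)]) simp
  ultimately show ?thesis
    unfolding f_def g_def by simp
qed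

lemma gamma_gamma_minus_self_in_span:
  fixes a b w :: "'k::field ^ 4"
  shows "gamma a (gamma b w) - w \<in> vec.span {a, b}"
proof -
  have "gamma x y - y \<in> vec.span {x, z}" "gamma x y - y \<in> vec.span {z, x}"
    for x y z :: "'k ^ 4"
    unfolding gamma_eq by (simp_all add: vec.span_base vec.span_scale vec.span_neg)
  then have "(gamma a (gamma b w) - gamma b w) + (gamma b w - w) \<in> vec.span {a, b}"
    by (rule vec.span_add)
  then show ?thesis by simp
qed

lemma gamma_conj_maps_into_span:
  fixes a b c :: "'k::field ^ 4"
  assumes cc: "bdot c c \<noteq> 0"
    and conj: "\<And>v. gamma c (gamma a (gamma b (gamma c v))) = gamma b (gamma a v)"
  shows "gamma c (gamma b (gamma a v) - v) \<in> vec.span {a, b}"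
proof -
  have "gamma c (gamma b (gamma a v) - v) = gamma c (gamma b (gamma a v)) - gamma c v"
    by (rule gamma.diff)
  also have "gamma c (gamma b (gamma a v)) = gamma a (gamma b (gamma c v))"
    by (simp flip: conj add: gamma_gamma[OF cc])
  finally show ?thesis
    by (simp add: gamma_gamma_minus_self_in_span)
qed

lemma exists_gamma_gamma_minus_self_eq:
  fixes a b :: "'k::field_char_0 ^ 4"
  assumes "a \<noteq> 0" "b \<noteq> 0" "\<not> proj_eq b a" and aa: "bdot a a \<noteq> 0" and bb: "bdot b b \<noteq> 0"
  shows "\<exists>v. gamma b (gamma a v) - v = a" "\<exists>v. gamma b (gamma a v) - v = b"
proof -
  obtain v where v: "bdot a v = - bdot a a / 2" "bdot b v = - bdot a b"
    using bdot_pair_solvable[OF assms(1-3)] .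
  have "gamma a v = v + a"
    using aa by (simp add: gamma_eq v vec_eq_iff)
  moreover have "bdot b (v + a) = 0"
    using v by (simp add: bdot_add_right bdot_commute[of a b])
  ultimately have "gamma b (gamma a v) - v = a"
    by (simp add: gamma_orthogonal)
  then show "\<exists>v. gamma b (gamma a v) - v = a" ..
  obtain w where w: "bdot a w = 0" "bdot b w = - bdot b b / 2"
    using bdot_pair_solvable[OF assms(1-3)] .
  have "gamma b (gamma a w) - w = b"
    using bb by (simp add: gamma_orthogonal w gamma_eq vec_eq_iff)
  then show "\<exists>v. gamma b (gamma a v) - v = b" ..
qed

lemma in_span_if_gamma_in_span:
  fixes c x :: "'k::field_char_0 ^ 4"
  assumes "bdot c c \<noteq> 0" "bdot c x \<noteq> 0" "x \<in> vec.span S" "gamma c x \<in> vec.span S"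
  shows "c \<in> vec.span S"
proof -
  have "c = (bdot c c / (2 * bdot c x)) *s (x - gamma c x)"
    using assms(1,2) by (simp add: gamma_eq vec_eq_iff field_simps)
  then show ?thesis
    using assms(3,4) by (metis vec.span_diff vec.span_scale)
qed

lemma on_line_or_on_perp_line_if_gamma_preserves_line:
  fixes a b c :: "'k::field_char_0 ^ 4"
  assumes "bdot c c \<noteq> 0" "gamma c a \<in> vec.span {a, b}" "gamma c b \<in> vec.span {a, b}"
  shows "on_line a b c \<or> on_perp_line a b c"
proof (cases "bdot c a = 0 \<and> bdot c b = 0")
  case True
  then show ?thesis by (simp add: on_perp_line_def bdot_commute)
next
  case False
  then have "c \<in> vec.span {a, b}"
    using in_span_if_gamma_in_span[OF assms(1)] assms(2,3) by (metis insertCI vec.span_base)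
  then show ?thesis by (simp add: on_line_iff_in_span)
qed

theorem lemma4p9:
  fixes a b c :: "'k::{alg_closed_field, field_char_0} ^ 4"
  assumes "a \<noteq> 0" "b \<noteq> 0" "c \<noteq> 0"
    and "bdot a a \<noteq> 0" "bdot b b \<noteq> 0" "bdot c c \<noteq> 0"
    and "\<not> proj_eq b a" "bdot b a \<noteq> 0"
    and "\<forall>q\<in>quadric. proj_eq (gamma c (gamma a (gamma b (gamma c q))))
                                (gamma b (gamma c (gamma c (gamma a q))))"
  shows "on_line a b c \<or> on_perp_line a b c"
proof -
  have ab: "bdot a b \<noteq> 0"
    using assms(8) by (simp add: bdot_commute)
  have "proj_eq (gamma c (gamma a (gamma b (gamma c q)))) (gamma b (gamma a q))"
    if "q \<in> quadric" for q
    using assms(9) that by (simp add: gamma_gamma[OF assms(6)])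
  then have conj: "gamma c (gamma a (gamma b (gamma c v))) = gamma b (gamma a v)" for v
    by (rule gamma_conj_eq_if_proj_eq_on_quadric[OF assms(1,2,7,4,5,6) ab])
  obtain u v where "gamma b (gamma a u) - u = a" "gamma b (gamma a v) - v = b"
    using exists_gamma_gamma_minus_self_eq[OF assms(1,2,7,4,5)] by blast
  then show ?thesis
    using gamma_conj_maps_into_span[OF assms(6) conj, of u]
      gamma_conj_maps_into_span[OF assms(6) conj, of v]
    by (intro on_line_or_on_perp_line_if_gamma_preserves_line[OF assms(6)]) simp_all
qed

end
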